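(* Let $X$ be a Banach space, $W\subseteq X$ a convex, symmetric and bounded set, $1<p<\infty$, and $Y=\Delta_p(W,X)$. A subset $A\subseteq W$ is a Banach-Saks subset of $X$ if and only if $A$ is a Banach-Saks subset of $Y$.
   Context: The Davis-Figiel-Johnson-Pe\l czy\'nski interpolation space $\Delta_p(W,X)$ is $\{x\in X:\|x\|_Y<\infty\}$ with $\|x\|_Y=\|(|x|_n)_n\|_{\ell_p}$, where $|x|_n=\inf\{\lambda>0: x/\lambda\in 2^nW+2^{-n}B_X\}$ and $B_X$ is the closed unit ball. A subset of a Banach space is a Banach-Saks set if every sequence in it has a subsequence whose Ces\`aro means converge in norm. *)

theory Defs
  imports "HOL-Analysis.Analysis"
begin

definition dfjp_set :: "'a::real_normed_vector set \<Rightarrow> nat \<Rightarrow> 'a set" where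
  "dfjp_set W n = {(2::real) ^ n *\<^sub>R w + (1 / 2 ^ n) *\<^sub>R b | w b. w \<in> W \<and> b \<in> cball 0 1}"

definition dfjp_gauge :: "'a::real_normed_vector set \<Rightarrow> nat \<Rightarrow> 'a \<Rightarrow> real" where
  "dfjp_gauge W n x = Inf {t::real. t > 0 \<and> (1 / t) *\<^sub>R x \<in> dfjp_set W n}"

text \<open>The space Delta_p(W,X) as a subset of X: the sequence (|x|_n)_n lies in l_p.\<close>
definition dfjp_space :: "real \<Rightarrow> 'a::real_normed_vector set \<Rightarrow> 'a set" where
  "dfjp_space p W = {x. summable (\<lambda>n. \<bar>dfjp_gauge W n x\<bar> powr p)}"

definition dfjp_norm :: "real \<Rightarrow> 'a::real_normed_vector set \<Rightarrow> 'a \<Rightarrow> real" where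
  "dfjp_norm p W x = (\<Sum>n. \<bar>dfjp_gauge W n x\<bar> powr p) powr (1 / p)"

definition cesaro :: "(nat \<Rightarrow> 'a::real_vector) \<Rightarrow> nat \<Rightarrow> 'a" where
  "cesaro s k = (1 / real (Suc k)) *\<^sub>R (\<Sum>i\<le>k. s i)"

definition banach_saks_set :: "'a::real_normed_vector set \<Rightarrow> bool" where
  "banach_saks_set A \<longleftrightarrow> (\<forall>s. (\<forall>n. s n \<in> A) \<longrightarrow>
     (\<exists>(r::nat \<Rightarrow> nat) L. strict_mono r \<and> cesaro (s \<circ> r) \<longlonglongrightarrow> L))"

definition banach_saks_set_dfjp :: "real \<Rightarrow> 'a::real_normed_vector set \<Rightarrow> 'a set \<Rightarrow> bool" where
  "banach_saks_set_dfjp p W A \<longleftrightarrow> (\<forall>s. (\<forall>n. s n \<in> A) \<longrightarrow>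
     (\<exists>(r::nat \<Rightarrow> nat) L. strict_mono r \<and> L \<in> dfjp_space p W \<and>
        (\<lambda>k. dfjp_norm p W (cesaro (s \<circ> r) k - L)) \<longlonglongrightarrow> 0))"

end

theory Submission
  imports Defs
begin

text \<open>
  The gauge |x|_n is the Minkowski functional of the convex symmetric set
  K_n = 2^n W + 2^-n B_X, which contains the ball of radius 2^-n and, if W lies in the ball
  of radius M, lies in the ball of radius 2^n M + 2^-n. Hence |.|_n is a seminorm with
  |x|_n \<le> 2^n ||x||, and ||x|| \<le> (M + 1) |x|_0 \<le> (M + 1) ||x||_Y, so convergence in Y
  implies convergence in X. Conversely, every point of the closure of W has |x|_n \<le> 2^-n.
  If points c_k of W converge in X to L, then |c_k - L|_n tends to 0 for each n and is
  bounded by the summable sequence 2^(1-n), so Tannery's theorem gives ||c_k - L||_Y \<rightarrow> 0.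
  Cesaro means of a sequence in A stay in the convex set W, so both notions of
  Banach-Saks set are witnessed by the same subsequences.
\<close>

lemma powr_add_le:
  fixes a b p :: real
  assumes "0 \<le> a" "0 \<le> b" "0 \<le> p"
  shows "(a + b) powr p \<le> 2 powr p * (a powr p + b powr p)"
proof -
  have "(a + b) powr p \<le> (2 * max a b) powr p"
    using assms by (intro powr_mono2) auto
  also have "\<dots> = 2 powr p * max a b powr p"
    using assms by (simp add: powr_mult)
  also have "max a b powr p \<le> a powr p + b powr p"
    by (simp add: max_def)
  finally show ?thesis by simp
qed

lemma summable_half_power_powr:
  assumes "0 < p"
  shows "summable (\<lambda>n. (1 / 2 ^ n :: real) powr p)"
proof -
  have "(1 / 2 ^ n :: real) powr p = (1 / 2 powr p) ^ n" for n
    by (simp add: powr_realpow [symmetric] powr_powr powr_divide powr_power mult.commute)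
  then show ?thesis
    using assms by (simp add: summable_geometric)
qed

lemma tendsto_suminf_zero_dominated:
  fixes a :: "nat \<Rightarrow> nat \<Rightarrow> real"
  assumes "\<And>n. (\<lambda>k. a n k) \<longlonglongrightarrow> 0" "\<And>n k. \<bar>a n k\<bar> \<le> M n" "summable M"
  shows "(\<lambda>k. \<Sum>n. a n k) \<longlonglongrightarrow> 0"
  using tannerys_theorem[of a "\<lambda>_. 0" sequentially M] assms by (simp add: always_eventually)

lemma cesaro_mem_convex:
  assumes "convex W" "\<And>i. s i \<in> W"
  shows "cesaro s k \<in> W"
proof -
  have "cesaro s k = (\<Sum>i\<le>k. (1 / real (Suc k)) *\<^sub>R s i)"
    unfolding cesaro_def by (simp add: scaleR_sum_right)
  also have "\<dots> \<in> W"
    by (rule convex_sum) (use assms in auto)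
  finally show ?thesis .
qed

definition minkowski_functional :: "'a::real_normed_vector set \<Rightarrow> 'a \<Rightarrow> real" where
  "minkowski_functional K x = Inf {t. 0 < t \<and> (1 / t) *\<^sub>R x \<in> K}"

lemma minkowski_functional_le:
  assumes "0 < t" "(1 / t) *\<^sub>R x \<in> K"
  shows "minkowski_functional K x \<le> t"
  unfolding minkowski_functional_def
  by (rule cInf_lower) (use assms in \<open>auto intro: bdd_belowI[of _ 0]\<close>)

lemma minkowski_functional_le_norm:
  assumes "cball 0 r \<subseteq> K" "0 < r"
  shows "minkowski_functional K x \<le> norm x / r"
proof (rule dense_ge)
  fix t assume t: "norm x / r < t"
  moreover have "0 \<le> norm x / r"
    using assms(2) by simp
  ultimately have "0 < t"
    by linarith
  moreover have "(1 / t) *\<^sub>R x \<in> cball 0 r"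
    using t \<open>0 < t\<close> assms(2) by (simp add: field_simps)
  ultimately show "minkowski_functional K x \<le> t"
    using assms(1) by (intro minkowski_functional_le) auto
qed

lemma minkowski_functional_set_nonempty:
  fixes x :: "'a::real_normed_vector"
  assumes "cball 0 r \<subseteq> K" "0 < r"
  shows "{t. 0 < t \<and> (1 / t) *\<^sub>R x \<in> K} \<noteq> {}"
proof -
  define t where "t = norm x / r + 1"
  have "0 < t"
    unfolding t_def using assms(2) by (simp add: add_nonneg_pos)
  moreover have "norm x \<le> r * t"
    unfolding t_def using assms(2) by (simp add: field_simps)
  ultimately have "(1 / t) *\<^sub>R x \<in> K"
    using assms(1) by (auto simp: field_simps mult.commute)
  with \<open>0 < t\<close> show ?thesis by blast
qed

lemma minkowski_functional_nonneg:
  assumes "cball 0 r \<subseteq> K" "0 < r"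
  shows "0 \<le> minkowski_functional K x"
  unfolding minkowski_functional_def
  by (rule cInf_greatest[OF minkowski_functional_set_nonempty[OF assms]]) auto

lemma minkowski_functional_uminus:
  assumes "\<And>x. x \<in> K \<Longrightarrow> - x \<in> K"
  shows "minkowski_functional K (- x) = minkowski_functional K x"
proof -
  have "(1 / t) *\<^sub>R - x \<in> K \<longleftrightarrow> (1 / t) *\<^sub>R x \<in> K" for t
    using assms[of "(1 / t) *\<^sub>R x"] assms[of "(1 / t) *\<^sub>R - x"] by auto
  then show ?thesis
    unfolding minkowski_functional_def by simp
qed

lemma minkowski_functional_triangle:
  assumes "convex K" "cball 0 r \<subseteq> K" "0 < r"
  shows "minkowski_functional K (x + y) \<le> minkowski_functional K x + minkowski_functional K y"
proof -
  let ?S = "\<lambda>x. {t. 0 < t \<and> (1 / t) *\<^sub>R x \<in> K}"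
  have sum_mem: "a + b \<in> ?S (x + y)" if "a \<in> ?S x" "b \<in> ?S y" for a b
  proof -
    from that have pos: "0 < a" "0 < b"
      and mem: "(1 / a) *\<^sub>R x \<in> K" "(1 / b) *\<^sub>R y \<in> K" by auto
    have "(1 / (a + b)) *\<^sub>R (x + y)
        = (a / (a + b)) *\<^sub>R ((1 / a) *\<^sub>R x) + (b / (a + b)) *\<^sub>R ((1 / b) *\<^sub>R y)"
      using pos by (simp add: algebra_simps divide_simps)
    also have "\<dots> \<in> K"
      using pos mem assms(1) by (intro convexD) (auto simp: divide_simps)
    finally show ?thesis using pos by simp
  qed
  have ne: "?S z \<noteq> {}" for z
    by (rule minkowski_functional_set_nonempty[OF assms(2,3)])
  have "minkowski_functional K (x + y) - b \<le> a" if "a \<in> ?S x" "b \<in> ?S y" for a b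
    using minkowski_functional_le[of "a + b" "x + y" K] sum_mem[OF that] by simp
  then have "minkowski_functional K (x + y) - b \<le> minkowski_functional K x" if "b \<in> ?S y" for b
    unfolding minkowski_functional_def[of K x] using that by (intro cInf_greatest ne) auto
  then have "minkowski_functional K (x + y) - minkowski_functional K x \<le> minkowski_functional K y"
    unfolding minkowski_functional_def[of K y]
    by (intro cInf_greatest ne) (auto simp: algebra_simps)
  then show ?thesis by simp
qed

lemma norm_le_minkowski_functional:
  assumes "K \<subseteq> cball 0 R" "0 < R" "cball 0 r \<subseteq> K" "0 < r"
  shows "norm x \<le> R * minkowski_functional K x"
proof -
  have "norm x / R \<le> t" if "0 < t" "(1 / t) *\<^sub>R x \<in> K" for t
    using that assms(1,2) by (auto simp: field_simps mult.commute)
  then have "norm x / R \<le> minkowski_functional K x"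
    unfolding minkowski_functional_def
    by (intro cInf_greatest minkowski_functional_set_nonempty[OF assms(3,4)]) auto
  then show ?thesis
    using assms(2) by (simp add: field_simps mult.commute)
qed

lemma cball_subset_dfjp_set:
  assumes "0 \<in> W"
  shows "cball 0 (1 / 2 ^ n) \<subseteq> dfjp_set W n"
proof
  fix b :: 'a assume "b \<in> cball 0 (1 / 2 ^ n)"
  then have "(2::real) ^ n *\<^sub>R b \<in> cball 0 1"
    by (simp add: field_simps)
  moreover have "b = (2::real) ^ n *\<^sub>R 0 + (1 / 2 ^ n) *\<^sub>R ((2::real) ^ n *\<^sub>R b)"
    by simp
  ultimately show "b \<in> dfjp_set W n"
    unfolding dfjp_set_def using assms by blast
qed

lemma scaleR_mem_dfjp_set: "w \<in> W \<Longrightarrow> (2::real) ^ n *\<^sub>R w \<in> dfjp_set W n"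
  unfolding dfjp_set_def by force

lemma convex_dfjp_set:
  assumes "convex W"
  shows "convex (dfjp_set W n)"
proof (rule convexI)
  fix x y and u v :: real
  assume "x \<in> dfjp_set W n" "y \<in> dfjp_set W n" and uv: "0 \<le> u" "0 \<le> v" "u + v = 1"
  then obtain w1 b1 w2 b2
    where x: "x = (2::real) ^ n *\<^sub>R w1 + (1 / 2 ^ n) *\<^sub>R b1" "w1 \<in> W" "b1 \<in> cball 0 1"
      and y: "y = (2::real) ^ n *\<^sub>R w2 + (1 / 2 ^ n) *\<^sub>R b2" "w2 \<in> W" "b2 \<in> cball 0 1"
    unfolding dfjp_set_def by blast
  have "u *\<^sub>R x + v *\<^sub>R y
      = (2::real) ^ n *\<^sub>R (u *\<^sub>R w1 + v *\<^sub>R w2) + (1 / 2 ^ n) *\<^sub>R (u *\<^sub>R b1 + v *\<^sub>R b2)"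
    unfolding x y by (simp add: algebra_simps)
  moreover have "u *\<^sub>R w1 + v *\<^sub>R w2 \<in> W"
    using assms x y uv by (intro convexD) auto
  moreover have "u *\<^sub>R b1 + v *\<^sub>R b2 \<in> cball 0 1"
    using x y uv by (intro convexD convex_cball) auto
  ultimately show "u *\<^sub>R x + v *\<^sub>R y \<in> dfjp_set W n"
    unfolding dfjp_set_def by blast
qed

lemma uminus_mem_dfjp_set:
  assumes "\<And>w. w \<in> W \<Longrightarrow> - w \<in> W" "x \<in> dfjp_set W n"
  shows "- x \<in> dfjp_set W n"
proof -
  obtain w b where x: "x = (2::real) ^ n *\<^sub>R w + (1 / 2 ^ n) *\<^sub>R b" "w \<in> W" "b \<in> cball 0 1"
    using assms(2) unfolding dfjp_set_def by blast
  have "- x = (2::real) ^ n *\<^sub>R (- w) + (1 / 2 ^ n) *\<^sub>R (- b)"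
    unfolding x by (simp add: algebra_simps)
  moreover have "- w \<in> W" "- b \<in> cball 0 1"
    using assms(1) x by auto
  ultimately show ?thesis
    unfolding dfjp_set_def by blast
qed

lemma dfjp_set_subset_cball:
  assumes "\<And>w. w \<in> W \<Longrightarrow> norm w \<le> M"
  shows "dfjp_set W n \<subseteq> cball 0 (2 ^ n * M + 1 / 2 ^ n)"
proof
  fix x assume "x \<in> dfjp_set W n"
  then obtain w b where x: "x = (2::real) ^ n *\<^sub>R w + (1 / 2 ^ n) *\<^sub>R b" "w \<in> W" "b \<in> cball 0 1"
    unfolding dfjp_set_def by blast
  have "norm x \<le> 2 ^ n * norm w + (1 / 2 ^ n) * norm b"
    unfolding x using norm_triangle_ineq[of "(2::real) ^ n *\<^sub>R w" "(1 / 2 ^ n) *\<^sub>R b"] by simp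
  also have "\<dots> \<le> 2 ^ n * M + (1 / 2 ^ n) * 1"
    using x assms by (intro add_mono mult_left_mono) auto
  finally show "x \<in> cball 0 (2 ^ n * M + 1 / 2 ^ n)" by simp
qed

lemma dfjp_gauge_eq_minkowski_functional:
  "dfjp_gauge W n = minkowski_functional (dfjp_set W n)"
  unfolding dfjp_gauge_def minkowski_functional_def by (rule ext) simp

lemma dfjp_gauge_le_of_mem: "w \<in> W \<Longrightarrow> dfjp_gauge W n w \<le> 1 / 2 ^ n"
  unfolding dfjp_gauge_eq_minkowski_functional
  by (rule minkowski_functional_le) (simp_all add: scaleR_mem_dfjp_set)

lemma abs_dfjp_gauge_le_dfjp_norm:
  assumes "0 < p" "x \<in> dfjp_space p W"
  shows "\<bar>dfjp_gauge W n x\<bar> \<le> dfjp_norm p W x"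
proof -
  have "\<bar>dfjp_gauge W n x\<bar> powr p \<le> (\<Sum>m. \<bar>dfjp_gauge W m x\<bar> powr p)"
    using assms(2) sum_le_suminf[of "\<lambda>m. \<bar>dfjp_gauge W m x\<bar> powr p" "{n}"]
    by (simp add: dfjp_space_def)
  then have "(\<bar>dfjp_gauge W n x\<bar> powr p) powr (1 / p) \<le> dfjp_norm p W x"
    unfolding dfjp_norm_def using assms(1) by (intro powr_mono2) auto
  then show ?thesis
    using assms(1) by (simp add: powr_powr)
qed

locale dfjp_generator =
  fixes W :: "'a::real_normed_vector set"
  assumes convex_W: "convex W"
    and symmetric_W: "\<And>w. w \<in> W \<Longrightarrow> - w \<in> W"
    and bounded_W: "bounded W"
    and nonempty_W: "W \<noteq> {}"
begin

lemma zero_mem: "0 \<in> W"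
proof -
  obtain w where "w \<in> W" using nonempty_W by blast
  then have "(1 / 2 :: real) *\<^sub>R w + (1 / 2 :: real) *\<^sub>R (- w) \<in> W"
    using symmetric_W by (intro convexD[OF convex_W]) auto
  then show ?thesis by simp
qed

lemma dfjp_gauge_nonneg: "0 \<le> dfjp_gauge W n x"
  unfolding dfjp_gauge_eq_minkowski_functional
  by (rule minkowski_functional_nonneg[OF cball_subset_dfjp_set[OF zero_mem]]) simp

lemma dfjp_gauge_le_norm: "dfjp_gauge W n x \<le> 2 ^ n * norm x"
  using minkowski_functional_le_norm[OF cball_subset_dfjp_set[OF zero_mem], of n x]
  unfolding dfjp_gauge_eq_minkowski_functional by (simp add: mult.commute)

lemma dfjp_gauge_uminus: "dfjp_gauge W n (- x) = dfjp_gauge W n x"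
  unfolding dfjp_gauge_eq_minkowski_functional
  by (rule minkowski_functional_uminus) (rule uminus_mem_dfjp_set[OF symmetric_W])

lemma dfjp_gauge_triangle: "dfjp_gauge W n (x + y) \<le> dfjp_gauge W n x + dfjp_gauge W n y"
  unfolding dfjp_gauge_eq_minkowski_functional
  by (rule minkowski_functional_triangle[OF convex_dfjp_set cball_subset_dfjp_set])
    (simp_all add: convex_W zero_mem)

lemma dfjp_gauge_diff_le: "dfjp_gauge W n (x - y) \<le> dfjp_gauge W n x + dfjp_gauge W n y"
  using dfjp_gauge_triangle[of n x "- y"] by (simp add: dfjp_gauge_uminus)

lemma dfjp_gauge_le_of_closure:
  assumes "x \<in> closure W"
  shows "dfjp_gauge W n x \<le> 1 / 2 ^ n"
proof (rule field_le_epsilon)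
  fix e :: real assume "0 < e"
  then obtain w where w: "w \<in> W" "dist x w < e / 2 ^ n"
    using closure_approachableD[OF assms]
    by (metis divide_pos_pos zero_less_numeral zero_less_power)
  have "dfjp_gauge W n x \<le> dfjp_gauge W n w + dfjp_gauge W n (x - w)"
    using dfjp_gauge_triangle[of n w "x - w"] by simp
  also have "\<dots> \<le> 1 / 2 ^ n + 2 ^ n * norm (x - w)"
    by (intro add_mono dfjp_gauge_le_of_mem w dfjp_gauge_le_norm)
  also have "2 ^ n * norm (x - w) \<le> e"
    using w(2) by (simp add: dist_norm field_simps)
  finally show "dfjp_gauge W n x \<le> 1 / 2 ^ n + e" by simp
qed

lemma dfjp_gauge_diff_le_of_closure:
  assumes "x \<in> closure W" "y \<in> closure W"
  shows "dfjp_gauge W n (x - y) \<le> 2 / 2 ^ n"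
  using dfjp_gauge_diff_le[of n x y] dfjp_gauge_le_of_closure[OF assms(1), of n]
    dfjp_gauge_le_of_closure[OF assms(2), of n]
  by simp

lemma norm_le_dfjp_gauge: "\<exists>C\<ge>0. \<forall>x. norm x \<le> C * dfjp_gauge W n x"
proof -
  obtain M where M: "\<And>w. w \<in> W \<Longrightarrow> norm w \<le> M"
    using bounded_W unfolding bounded_iff by blast
  have "0 \<le> M" using M[OF zero_mem] by simp
  then have "0 < 2 ^ n * M + 1 / 2 ^ n"
    by (simp add: add_nonneg_pos)
  then show ?thesis
    using norm_le_minkowski_functional
      [OF dfjp_set_subset_cball[OF M] _ cball_subset_dfjp_set[OF zero_mem]]
    unfolding dfjp_gauge_eq_minkowski_functional by (auto intro: less_imp_le)
qed

lemma mem_dfjp_space_of_closure: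
  assumes "0 < p" "x \<in> closure W"
  shows "x \<in> dfjp_space p W"
  unfolding dfjp_space_def mem_Collect_eq
proof (rule summable_comparison_test'[OF summable_half_power_powr[OF assms(1)]])
  fix n
  show "norm (\<bar>dfjp_gauge W n x\<bar> powr p) \<le> (1 / 2 ^ n) powr p"
    using dfjp_gauge_le_of_closure[OF assms(2), of n] dfjp_gauge_nonneg[of n x] assms(1)
    by (simp add: powr_mono2)
qed

lemma mem_dfjp_space: "0 < p \<Longrightarrow> x \<in> W \<Longrightarrow> x \<in> dfjp_space p W"
  using mem_dfjp_space_of_closure closure_subset by blast

lemma diff_mem_dfjp_space:
  assumes "0 \<le> p" "x \<in> dfjp_space p W" "y \<in> dfjp_space p W"
  shows "x - y \<in> dfjp_space p W"
  unfolding dfjp_space_def mem_Collect_eq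
proof (rule summable_comparison_test')
  let ?g = "dfjp_gauge W"
  show "summable (\<lambda>n. 2 powr p * (\<bar>?g n x\<bar> powr p + \<bar>?g n y\<bar> powr p))"
    using assms(2,3) by (intro summable_mult summable_add) (auto simp: dfjp_space_def)
  fix n
  have "\<bar>?g n (x - y)\<bar> powr p \<le> (\<bar>?g n x\<bar> + \<bar>?g n y\<bar>) powr p"
    using dfjp_gauge_diff_le[of n x y] dfjp_gauge_nonneg[of n] assms(1) by (intro powr_mono2) auto
  also have "\<dots> \<le> 2 powr p * (\<bar>?g n x\<bar> powr p + \<bar>?g n y\<bar> powr p)"
    using assms(1) by (intro powr_add_le) auto
  finally show "norm (\<bar>?g n (x - y)\<bar> powr p) \<le> 2 powr p * (\<bar>?g n x\<bar> powr p + \<bar>?g n y\<bar> powr p)"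
    by simp
qed

lemma norm_le_dfjp_norm:
  assumes "0 < p"
  shows "\<exists>C. \<forall>x \<in> dfjp_space p W. norm x \<le> C * dfjp_norm p W x"
proof -
  obtain C where "0 \<le> C" and C: "\<And>x. norm x \<le> C * dfjp_gauge W 0 x"
    using norm_le_dfjp_gauge by blast
  have "norm x \<le> C * dfjp_norm p W x" if "x \<in> dfjp_space p W" for x
  proof -
    have "dfjp_gauge W 0 x \<le> dfjp_norm p W x"
      using abs_dfjp_gauge_le_dfjp_norm[OF assms that] by (rule abs_le_D1)
    then show ?thesis
      using C[of x] \<open>0 \<le> C\<close> by (meson mult_left_mono order_trans)
  qed
  then show ?thesis by blast
qed

lemma tendsto_dfjp_norm_of_tendsto:
  assumes "0 < p" "\<And>k. c k \<in> W" "c \<longlonglongrightarrow> L"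
  shows "(\<lambda>k. dfjp_norm p W (c k - L)) \<longlonglongrightarrow> 0"
proof -
  let ?a = "\<lambda>n k. \<bar>dfjp_gauge W n (c k - L)\<bar> powr p"
  have "L \<in> closure W"
    using assms(2,3) closure_sequential by blast
  have "(\<lambda>k. dfjp_gauge W n (c k - L)) \<longlonglongrightarrow> 0" for n
  proof (rule Lim_null_comparison)
    show "\<forall>\<^sub>F k in sequentially. norm (dfjp_gauge W n (c k - L)) \<le> 2 ^ n * norm (c k - L)"
      by (simp add: dfjp_gauge_nonneg dfjp_gauge_le_norm)
    show "(\<lambda>k. 2 ^ n * norm (c k - L)) \<longlonglongrightarrow> 0"
      using tendsto_mult_right_zero[OF tendsto_norm_zero[OF LIM_zero[OF assms(3)]]] .
  qed
  then have "(\<lambda>k. ?a n k) \<longlonglongrightarrow> 0" for n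
    using assms(1) by (intro tendsto_zero_powrI tendsto_rabs_zero) auto
  moreover have "\<bar>?a n k\<bar> \<le> 2 powr p * (1 / 2 ^ n) powr p" for n k
  proof -
    have "?a n k \<le> (2 * (1 / 2 ^ n)) powr p"
      using dfjp_gauge_diff_le_of_closure
          [OF closure_subset[THEN subsetD, OF assms(2)] \<open>L \<in> closure W\<close>]
        dfjp_gauge_nonneg assms(1)
      by (simp add: powr_mono2)
    also have "\<dots> = 2 powr p * (1 / 2 ^ n) powr p"
      by (rule powr_mult)
    finally show ?thesis
      by simp
  qed
  ultimately have "(\<lambda>k. \<Sum>n. ?a n k) \<longlonglongrightarrow> 0"
    by (rule tendsto_suminf_zero_dominated)
      (intro summable_mult summable_half_power_powr assms(1))
  moreover have "0 \<le> (\<Sum>n. ?a n k)" for k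
  proof -
    have "c k - L \<in> dfjp_space p W"
      using assms(1) mem_dfjp_space[OF assms(1,2)]
        mem_dfjp_space_of_closure[OF assms(1) \<open>L \<in> closure W\<close>]
      by (intro diff_mem_dfjp_space) auto
    then show ?thesis
      unfolding dfjp_space_def by (intro suminf_nonneg) auto
  qed
  ultimately show ?thesis
    unfolding dfjp_norm_def using assms(1) by (intro tendsto_zero_powrI[where b = "1 / p"]) auto
qed

lemma tendsto_of_tendsto_dfjp_norm:
  assumes "0 < p" "\<And>k. c k \<in> W" "L \<in> dfjp_space p W"
    and "(\<lambda>k. dfjp_norm p W (c k - L)) \<longlonglongrightarrow> 0"
  shows "c \<longlonglongrightarrow> L"
proof -
  obtain C where C: "\<And>x. x \<in> dfjp_space p W \<Longrightarrow> norm x \<le> C * dfjp_norm p W x"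
    using norm_le_dfjp_norm[OF assms(1)] by blast
  have "c k - L \<in> dfjp_space p W" for k
    using assms(1,3) mem_dfjp_space[OF assms(1,2)] by (intro diff_mem_dfjp_space) auto
  then have "\<forall>\<^sub>F k in sequentially. norm (c k - L) \<le> C * dfjp_norm p W (c k - L)"
    using C by simp
  then have "(\<lambda>k. c k - L) \<longlonglongrightarrow> 0"
    by (rule Lim_null_comparison) (rule tendsto_mult_right_zero[OF assms(4)])
  then show ?thesis
    by (rule LIM_zero_cancel)
qed

lemma convergent_iff_dfjp_convergent:
  assumes "0 < p" "\<And>k. c k \<in> W"
  shows "(\<exists>L. c \<longlonglongrightarrow> L)
    \<longleftrightarrow> (\<exists>L. L \<in> dfjp_space p W \<and> (\<lambda>k. dfjp_norm p W (c k - L)) \<longlonglongrightarrow> 0)"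
proof
  assume "\<exists>L. c \<longlonglongrightarrow> L"
  then obtain L where L: "c \<longlonglongrightarrow> L" ..
  then have "L \<in> closure W"
    using assms(2) closure_sequential by blast
  then show "\<exists>L. L \<in> dfjp_space p W \<and> (\<lambda>k. dfjp_norm p W (c k - L)) \<longlonglongrightarrow> 0"
    using mem_dfjp_space_of_closure tendsto_dfjp_norm_of_tendsto assms L by blast
qed (use tendsto_of_tendsto_dfjp_norm assms in blast)

end

theorem lemma4p14:
  fixes W A :: "'a::banach set" and p :: real
  assumes "convex W"
    and "\<And>x. x \<in> W \<Longrightarrow> - x \<in> W"
    and "bounded W"
    and "1 < p"
    and "A \<subseteq> W"
  shows "banach_saks_set A \<longleftrightarrow> banach_saks_set_dfjp p W A"
proof (cases "A = {}")
  case True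
  then show ?thesis
    by (simp add: banach_saks_set_def banach_saks_set_dfjp_def)
next
  case False
  interpret dfjp_generator W
    using assms(1-3,5) False by unfold_locales auto
  have "0 < p"
    using assms(4) by simp
  have "cesaro (s \<circ> r) k \<in> W" if "\<forall>n. s n \<in> A" for s :: "nat \<Rightarrow> 'a" and r k
    using that assms(5) by (intro cesaro_mem_convex[OF assms(1)]) auto
  then have "(\<exists>L. cesaro (s \<circ> r) \<longlonglongrightarrow> L) \<longleftrightarrow>
      (\<exists>L. L \<in> dfjp_space p W \<and> (\<lambda>k. dfjp_norm p W (cesaro (s \<circ> r) k - L)) \<longlonglongrightarrow> 0)"
    if "\<forall>n. s n \<in> A" for s :: "nat \<Rightarrow> 'a" and r
    using convergent_iff_dfjp_convergent[OF \<open>0 < p\<close>] that by blast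
  then show ?thesis
    unfolding banach_saks_set_def banach_saks_set_dfjp_def by meson
qed

end
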